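(* Let $p_1,\dots,p_d\in(0,1)$ with $p_i\neq\frac12$ for all $i$, and let $\mu(X)=\prod_{i:x_i=1}p_i\prod_{i:x_i=0}(1-p_i)$ for $X\in Q_d$. Then this distribution has an equilibrium.
   Context: $Q_d=\{0,1\}^d$ with the Hamming distance $d(X,Y)=|\{i: x_i\neq y_i\}|$. For a probability distribution $\mu$ on $Q_d$ (extended additively to subsets), and $A,B\in Q_d$, let $V(A,B)=\{X: d(X,A)<d(X,B)\}$, $T(A,B)=\{X: d(X,A)=d(X,B)\}$, $P_1(A,B)=\mu(V(A,B))+\frac12\mu(T(A,B))$, $P_2(A,B)=\mu(V(B,A))+\frac12\mu(T(A,B))$. $(A,B)$ is an equilibrium if $P_1(A,B)\ge P_1(A',B)$ for all $A'\in Q_d$ and $P_2(A,B)\ge P_2(A,B')$ for all $B'\in Q_d$. *)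

theory Defs
  imports Complex_Main
begin

text \<open>The hypercube Q_d: points are functions nat => bool, coordinates i < d,
  fixed to False outside {..<d} (so Q_d has exactly 2^d elements).\<close>
definition cube :: "nat \<Rightarrow> (nat \<Rightarrow> bool) set" where
  "cube d = {X. \<forall>i. d \<le> i \<longrightarrow> \<not> X i}"

definition hamming :: "nat \<Rightarrow> (nat \<Rightarrow> bool) \<Rightarrow> (nat \<Rightarrow> bool) \<Rightarrow> nat" where
  "hamming d X Y = card {i\<in>{..<d}. X i \<noteq> Y i}"

definition measure_of :: "nat \<Rightarrow> ((nat \<Rightarrow> bool) \<Rightarrow> real) \<Rightarrow> (nat \<Rightarrow> bool) set \<Rightarrow> real" where
  "measure_of d \<mu> S = (\<Sum>X\<in>S \<inter> cube d. \<mu> X)"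

definition Vor :: "nat \<Rightarrow> (nat \<Rightarrow> bool) \<Rightarrow> (nat \<Rightarrow> bool) \<Rightarrow> (nat \<Rightarrow> bool) set" where
  "Vor d A B = {X\<in>cube d. hamming d X A < hamming d X B}"

definition Tie :: "nat \<Rightarrow> (nat \<Rightarrow> bool) \<Rightarrow> (nat \<Rightarrow> bool) \<Rightarrow> (nat \<Rightarrow> bool) set" where
  "Tie d A B = {X\<in>cube d. hamming d X A = hamming d X B}"

definition payoff1 :: "nat \<Rightarrow> ((nat \<Rightarrow> bool) \<Rightarrow> real) \<Rightarrow> (nat \<Rightarrow> bool) \<Rightarrow> (nat \<Rightarrow> bool) \<Rightarrow> real" where
  "payoff1 d \<mu> A B = measure_of d \<mu> (Vor d A B) + measure_of d \<mu> (Tie d A B) / 2"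

definition payoff2 :: "nat \<Rightarrow> ((nat \<Rightarrow> bool) \<Rightarrow> real) \<Rightarrow> (nat \<Rightarrow> bool) \<Rightarrow> (nat \<Rightarrow> bool) \<Rightarrow> real" where
  "payoff2 d \<mu> A B = measure_of d \<mu> (Vor d B A) + measure_of d \<mu> (Tie d A B) / 2"

definition equilibrium :: "nat \<Rightarrow> ((nat \<Rightarrow> bool) \<Rightarrow> real) \<Rightarrow> (nat \<Rightarrow> bool) \<Rightarrow> (nat \<Rightarrow> bool) \<Rightarrow> bool" where
  "equilibrium d \<mu> A B \<longleftrightarrow> A \<in> cube d \<and> B \<in> cube d \<and>
     (\<forall>A'\<in>cube d. payoff1 d \<mu> A B \<ge> payoff1 d \<mu> A' B) \<and>
     (\<forall>B'\<in>cube d. payoff2 d \<mu> A B \<ge> payoff2 d \<mu> A B')"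

definition product_dist :: "nat \<Rightarrow> (nat \<Rightarrow> real) \<Rightarrow> (nat \<Rightarrow> bool) \<Rightarrow> real" where
  "product_dist d p X = (\<Prod>i<d. if X i then p i else 1 - p i)"

end

theory Submission
  imports Defs
begin

text \<open>The coordinatewise mode M of the product distribution, with M i iff p i > 1/2, is a
  symmetric equilibrium. Since the payoffs of (M, M) are both half the total mass, it suffices
  that every A captures no more mass against M than M captures against A, i.e. that
  E[sgn(d(X,A) - d(X,M))] \<ge> 0. The difference d(X,A) - d(X,M) is a sum of independent steps,
  each either 0 or \<plusminus>1 with the +1 outcome at least as likely. Induction over the coordinates
  shows that such a sum S satisfies E f(S) \<ge> E f(-S) for every monotone f; apply this to
  f = sgn, which is odd.\<close>

lemma cube_Suc: "cube (Suc n) = cube n \<union> (\<lambda>X. X(n := True)) ` cube n"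
proof
  show "cube (Suc n) \<subseteq> cube n \<union> (\<lambda>X. X(n := True)) ` cube n"
  proof
    fix X assume X: "X \<in> cube (Suc n)"
    show "X \<in> cube n \<union> (\<lambda>X. X(n := True)) ` cube n"
    proof (cases "X n")
      case True
      have "X(n := False) \<in> cube n" using X by (auto simp: cube_def)
      moreover have "X = (X(n := False))(n := True)" using True by (auto simp: fun_eq_iff)
      ultimately show ?thesis by (intro UnI2 image_eqI)
    next
      case False
      have "\<not> X i" if "n \<le> i" for i
        using X False that by (cases "i = n") (auto simp: cube_def)
      then show ?thesis by (simp add: cube_def)
    qed
  qed
qed (auto simp: cube_def)

lemma finite_cube: "finite (cube n)"
proof (induction n)
  case 0
  have "cube 0 = {\<lambda>_. False}" by (auto simp: cube_def fun_eq_iff)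
  then show ?case by simp
next
  case (Suc n)
  then show ?case by (simp add: cube_Suc)
qed

lemma sum_cube_Suc:
  "(\<Sum>X\<in>cube (Suc n). g X) = (\<Sum>X\<in>cube n. g X) + (\<Sum>X\<in>cube n. g (X(n := True)))"
proof -
  have disj: "cube n \<inter> (\<lambda>X. X(n := True)) ` cube n = {}" by (auto simp: cube_def)
  have inj: "inj_on (\<lambda>X. X(n := True)) (cube n)"
    by (rule inj_onI) (auto simp: cube_def fun_eq_iff split: if_splits)
  have "(\<Sum>X\<in>cube (Suc n). g X) = (\<Sum>X\<in>cube n. g X) + (\<Sum>X\<in>(\<lambda>X. X(n := True)) ` cube n. g X)"
    unfolding cube_Suc by (rule sum.union_disjoint) (use finite_cube disj in auto)
  also have "(\<Sum>X\<in>(\<lambda>X. X(n := True)) ` cube n. g X) = (\<Sum>X\<in>cube n. g (X(n := True)))"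
    using sum.reindex[OF inj] by simp
  finally show ?thesis .
qed

lemma measure_of_Un:
  assumes "S \<inter> T = {}"
  shows "measure_of d \<mu> (S \<union> T) = measure_of d \<mu> S + measure_of d \<mu> T"
  unfolding measure_of_def Int_Un_distrib2
  by (rule sum.union_disjoint) (use assms finite_cube in auto)

lemma measure_of_cube_split:
  "measure_of d \<mu> (cube d) =
     measure_of d \<mu> (Vor d A B) + measure_of d \<mu> (Vor d B A) + measure_of d \<mu> (Tie d A B)"
proof -
  have "cube d = (Vor d A B \<union> Vor d B A) \<union> Tie d A B"
    by (auto simp: Vor_def Tie_def)
  then have "measure_of d \<mu> (cube d) = measure_of d \<mu> ((Vor d A B \<union> Vor d B A) \<union> Tie d A B)"
    by (rule arg_cong)
  also have "\<dots> = measure_of d \<mu> (Vor d A B) + measure_of d \<mu> (Vor d B A) + measure_of d \<mu> (Tie d A B)"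
    by (subst measure_of_Un, (auto simp: Vor_def Tie_def)[1])+ (rule refl)
  finally show ?thesis .
qed

lemma payoff2_eq_payoff1_swap: "payoff2 d \<mu> A B = payoff1 d \<mu> B A"
  unfolding payoff1_def payoff2_def Tie_def by (metis (no_types))

lemma payoff1_le_payoff1_self_iff:
  "payoff1 d \<mu> A B \<le> payoff1 d \<mu> B B \<longleftrightarrow> measure_of d \<mu> (Vor d A B) \<le> measure_of d \<mu> (Vor d B A)"
proof -
  have "Tie d B B = cube d" "Vor d B B = {}" by (auto simp: Tie_def Vor_def)
  then have "payoff1 d \<mu> B B = measure_of d \<mu> (cube d) / 2"
    by (simp add: payoff1_def measure_of_def)
  moreover have "payoff1 d \<mu> A B = measure_of d \<mu> (Vor d A B) + measure_of d \<mu> (Tie d A B) / 2"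
    by (rule payoff1_def)
  ultimately show ?thesis
    using measure_of_cube_split[of d \<mu> A B] by linarith
qed

lemma equilibrium_selfI:
  assumes "B \<in> cube d"
    and "\<And>A. A \<in> cube d \<Longrightarrow> measure_of d \<mu> (Vor d A B) \<le> measure_of d \<mu> (Vor d B A)"
  shows "equilibrium d \<mu> B B"
  using assms by (simp add: equilibrium_def payoff2_eq_payoff1_swap payoff1_le_payoff1_self_iff)

definition cube_expectation ::
    "nat \<Rightarrow> (nat \<Rightarrow> bool \<Rightarrow> real) \<Rightarrow> (nat \<Rightarrow> bool \<Rightarrow> int) \<Rightarrow> (int \<Rightarrow> real) \<Rightarrow> real" where
  "cube_expectation n w c f = (\<Sum>X\<in>cube n. (\<Prod>i<n. w i (X i)) * f (\<Sum>i<n. c i (X i)))"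

definition positively_biased :: "(bool \<Rightarrow> real) \<Rightarrow> (bool \<Rightarrow> int) \<Rightarrow> bool" where
  "positively_biased w c \<longleftrightarrow> 0 \<le> w True \<and> 0 \<le> w False \<and>
     (c True = 0 \<and> c False = 0 \<or>
      c True = 1 \<and> c False = -1 \<and> w False \<le> w True \<or>
      c True = -1 \<and> c False = 1 \<and> w True \<le> w False)"

lemma cube_expectation_Suc:
  "cube_expectation (Suc n) w c f =
     w n True * cube_expectation n w c (\<lambda>x. f (x + c n True)) +
     w n False * cube_expectation n w c (\<lambda>x. f (x + c n False))"
proof -
  have upd_prod: "(\<Prod>i<n. w i (if i = n then b else X i)) = (\<Prod>i<n. w i (X i))"
    and upd_sum: "(\<Sum>i<n. c i (if i = n then b else X i)) = (\<Sum>i<n. c i (X i))" for X b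
    by (auto intro: prod.cong sum.cong)
  have outside: "X n = False" if "X \<in> cube n" for X using that by (auto simp: cube_def)
  show ?thesis
    unfolding cube_expectation_def sum_cube_Suc
    by (simp add: outside upd_prod upd_sum sum_distrib_left algebra_simps cong: sum.cong)
qed

lemma cube_expectation_mono:
  assumes "\<forall>i<n. \<forall>b. 0 \<le> w i b" and "\<And>x. f x \<le> g x"
  shows "cube_expectation n w c f \<le> cube_expectation n w c g"
  unfolding cube_expectation_def
  by (rule sum_mono, rule mult_left_mono) (use assms in \<open>auto intro: prod_nonneg\<close>)

lemma cube_expectation_uminus:
  "cube_expectation n w (\<lambda>i b. - c i b) f = cube_expectation n w c (\<lambda>x. f (- x))"
  by (simp add: cube_expectation_def sum_negf)

text \<open>The step of the induction for a \<plusminus>1 coordinate: a and b weigh its favoured and other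
  outcome, X1, X2 are E f(S + 1), E f(S - 1) and Y1, Y2 are E f(-S + 1), E f(-S - 1).\<close>
lemma biased_mix_le:
  fixes a b X1 X2 Y1 Y2 :: real
  assumes "0 \<le> b" "b \<le> a" "Y1 \<le> X1" "Y2 \<le> X2" "X2 \<le> X1"
  shows "a * Y2 + b * Y1 \<le> a * X1 + b * X2"
proof -
  have "a * X1 + b * X2 - (a * Y2 + b * Y1) = b * ((X1 - Y1) + (X2 - Y2)) + (a - b) * (X1 - Y2)"
    by (simp add: algebra_simps)
  moreover have "0 \<le> b * ((X1 - Y1) + (X2 - Y2))" "0 \<le> (a - b) * (X1 - Y2)"
    using assms by simp_all
  ultimately show ?thesis by linarith
qed

lemma cube_expectation_neg_le:
  assumes "\<forall>i<n. positively_biased (w i) (c i)" and "mono f"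
  shows "cube_expectation n w (\<lambda>i b. - c i b) f \<le> cube_expectation n w c f"
  using assms
proof (induction n arbitrary: f)
  case 0
  then show ?case by (simp add: cube_expectation_def)
next
  case (Suc n)
  let ?E = "\<lambda>c k. cube_expectation n w c (\<lambda>x. f (x + k))"
  have weights: "\<forall>i<n. \<forall>b. 0 \<le> w i b"
    using Suc.prems(1) by (auto simp: positively_biased_def all_bool_eq)
  have IH: "?E (\<lambda>i b. - c i b) k \<le> ?E c k" for k
    by (rule Suc.IH) (use Suc.prems in \<open>auto simp: mono_def\<close>)
  have shift: "?E c' (-1) \<le> ?E c' 1" for c'
    by (rule cube_expectation_mono[OF weights]) (use Suc.prems(2) in \<open>auto simp: mono_def\<close>)
  have "positively_biased (w n) (c n)" using Suc.prems(1) by simp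
  then consider "c n True = 0" "c n False = 0" "0 \<le> w n True" "0 \<le> w n False"
    | "c n True = 1" "c n False = -1" "0 \<le> w n False" "w n False \<le> w n True"
    | "c n True = -1" "c n False = 1" "0 \<le> w n True" "w n True \<le> w n False"
    unfolding positively_biased_def by blast
  then show ?case
  proof cases
    case 1
    then show ?thesis
      using IH[of 0] by (simp add: cube_expectation_Suc mult_left_mono flip: distrib_right)
  next
    case 2
    then show ?thesis
      using biased_mix_le[OF _ _ IH IH shift] by (simp add: cube_expectation_Suc)
  next
    case 3
    then show ?thesis
      using biased_mix_le[of "w n True" "w n False", OF _ _ IH IH shift]
      by (simp add: cube_expectation_Suc algebra_simps)
  qed
qed

lemma cube_expectation_sgn_nonneg:
  assumes "\<forall>i<n. positively_biased (w i) (c i)"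
  shows "0 \<le> cube_expectation n w c (\<lambda>x. of_int (sgn x))"
proof -
  have "mono (\<lambda>x::int. real_of_int (sgn x))" by (auto simp: mono_def sgn_if)
  from cube_expectation_neg_le[OF assms this] show ?thesis
    by (simp add: cube_expectation_uminus cube_expectation_def sum_negf)
qed

definition product_mode :: "nat \<Rightarrow> (nat \<Rightarrow> real) \<Rightarrow> nat \<Rightarrow> bool" where
  "product_mode d p i \<longleftrightarrow> i < d \<and> 1/2 < p i"

lemma product_mode_in_cube: "product_mode d p \<in> cube d"
  by (simp add: cube_def product_mode_def)

lemma int_hamming: "int (hamming d X A) = (\<Sum>i<d. if X i \<noteq> A i then 1 else 0)"
  unfolding hamming_def by (simp add: sum.inter_filter[symmetric] of_nat_sum)

lemma measure_of_eq_sum_if: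
  assumes "S \<subseteq> cube d"
  shows "measure_of d \<mu> S = (\<Sum>X\<in>cube d. if X \<in> S then \<mu> X else 0)"
proof -
  have "S \<inter> cube d = {X \<in> cube d. X \<in> S}" using assms by auto
  then show ?thesis by (simp add: measure_of_def sum.inter_filter[OF finite_cube])
qed

lemma product_mode_Vor_le:
  assumes "\<forall>i<d. 0 \<le> p i \<and> p i \<le> 1"
  defines "M \<equiv> product_mode d p"
  shows "measure_of d (product_dist d p) (Vor d A M) \<le> measure_of d (product_dist d p) (Vor d M A)"
proof -
  define w where "w = (\<lambda>i b. if b then p i else 1 - p i)"
  define c :: "nat \<Rightarrow> bool \<Rightarrow> int" where
    "c = (\<lambda>i b. (if b \<noteq> A i then 1 else 0) - (if b \<noteq> M i then 1 else 0))"
  have "positively_biased (w i) (c i)" if "i < d" for i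
    using assms that
    by (cases "A i"; cases "M i") (auto simp: positively_biased_def w_def c_def M_def product_mode_def)
  then have "0 \<le> cube_expectation d w c (\<lambda>x. of_int (sgn x))"
    by (simp add: cube_expectation_sgn_nonneg)
  also have "cube_expectation d w c (\<lambda>x. of_int (sgn x)) =
      (\<Sum>X\<in>cube d. product_dist d p X * of_int (sgn (int (hamming d X A) - int (hamming d X M))))"
    unfolding cube_expectation_def int_hamming c_def
    by (simp add: w_def product_dist_def sum_subtractf)
  also have "\<dots> = (\<Sum>X\<in>cube d. (if X \<in> Vor d M A then product_dist d p X else 0)
                                 - (if X \<in> Vor d A M then product_dist d p X else 0))"
    by (rule sum.cong) (auto simp: Vor_def sgn_if)
  also have "\<dots> = measure_of d (product_dist d p) (Vor d M A) - measure_of d (product_dist d p) (Vor d A M)"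
    by (simp add: sum_subtractf measure_of_eq_sum_if Vor_def)
  finally show ?thesis by simp
qed

theorem mainTheorem8:
  fixes d :: nat and p :: "nat \<Rightarrow> real"
  assumes "\<forall>i<d. 0 < p i \<and> p i < 1"
    and "\<forall>i<d. p i \<noteq> 1/2"
  shows "\<exists>A B. equilibrium d (product_dist d p) A B"
proof -
  have "\<forall>i<d. 0 \<le> p i \<and> p i \<le> 1" using assms(1) by auto
  then have "equilibrium d (product_dist d p) (product_mode d p) (product_mode d p)"
    by (intro equilibrium_selfI product_mode_in_cube product_mode_Vor_le)
  then show ?thesis by blast
qed

end
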